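(* Consider a region discretized by the FDTD-Q scheme described in the context, with time step $\Delta t$ satisfying $$0<\Delta t<\Delta t_{\mathrm{CFL,gen}}=\frac{2}{\rho\!\left(\frac{1}{\hbar}(D_V'')^{-1/2}H(D_V'')^{-1/2}\right)},$$ where $\rho(\cdot)$ denotes the spectral radius. Then the total probability $\mathcal{P}^n=(\psi^n)^T\mathbf{P}\,\psi^n$ satisfies $\mathcal{P}^n\ge 0$ for all $n=0,1,\dots,n_t$, and the total probability and the probability current satisfy $$\frac{\mathcal{P}^{n+1}-\mathcal{P}^n}{\Delta t}=-\mathcal{I}_P^{n+\frac12},\qquad n=0,1,\dots,n_t-1.$$
   Context: Fix constants $\hbar>0$, $m>0$, cell sizes $\Delta x,\Delta y,\Delta z>0$, positive integers $n_x,n_y,n_z,n_t$ and a time step $\Delta t>0$. The region is a box made of $n_x\times n_y\times n_z$ primary cells of size $\Delta x\times\Delta y\times\Delta z$, with primary nodes $(i,j,k)$, $1\le i\le n_x+1$, $1\le j\le n_y+1$, $1\le k\le n_z+1$. Let $N=(n_x+1)(n_y+1)(n_z+1)$; vectors indexed by nodes use the ordering $i+(j-1)(n_x+1)+(k-1)(n_x+1)(n_y+1)$. Real potential values $U_{i,j,k}$ are given at the nodes; $D_U$ is the $N\times N$ diagonal matrix containing them. Let $I_p$ be the $p\times p$ identity, $\tilde I_p=\mathrm{diag}(\tfrac12,1,\dots,1,\tfrac12)$ ($p\times p$), $W_p=[0_{p\times1}\ I_p]-[I_p\ 0_{p\times 1}]$ ($p\times(p+1)$), $\otimes$ the Kronecker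 product, and $e\{p,q\}$ the $q\times 1$ vector with $1$ in position $p$ and zeros elsewhere. Define $D_V''=\Delta x\Delta y\Delta z\,\tilde I_{n_z+1}\otimes\tilde I_{n_y+1}\otimes\tilde I_{n_x+1}$; $D=[D_x\ D_y\ D_z]$ with $D_x=-I_{n_z+1}\otimes I_{n_y+1}\otimes W_{n_x}^T$, $D_y=-I_{n_z+1}\otimes W_{n_y}^T\otimes I_{n_x+1}$, $D_z=-W_{n_z}^T\otimes I_{n_y+1}\otimes I_{n_x+1}$; $D_S''=\mathrm{diag}(\Delta y\Delta z\,\tilde I_{n_z+1}\otimes\tilde I_{n_y+1}\otimes I_{n_x},\ \Delta x\Delta z\,\tilde I_{n_z+1}\otimes I_{n_y}\otimes\tilde I_{n_x+1},\ \Delta x\Delta y\,I_{n_z}\otimes\tilde I_{n_y+1}\otimes\tilde I_{n_x+1})$; $D_l'=\mathrm{diag}(\Delta x\, I_{n_x(n_y+1)(n_z+1)},\ \Delta y\, I_{(n_x+1)n_y(n_z+1)},\ \Delta z\, I_{(n_x+1)(n_y+1)n_z})$; $H=\frac{\hbar^2}{2m}D D_S''(D_l')^{-1}D^T+D_V''D_U$; $\mathbf{P}=\begin{bmatrix}D_V''&-\frac{\Delta t}{2\hbar}H\\-\frac{\Delta t}{2\hbar}H&D_V''\end{bmatrix}$. Boundary ("hanging") variables: $L=[L_W\ L_E\ L_S\ L_N\ L_B\ L_T]$ with $L_W=I_{n_z+1}\otimes I_{n_y+1}\otimes e\{1,n_x+1\}$, $L_E=I_{n_z+1}\otimes I_{n_y+1}\otimes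 e\{n_x+1,n_x+1\}$, $L_S=I_{n_z+1}\otimes e\{1,n_y+1\}\otimes I_{n_x+1}$, $L_N=I_{n_z+1}\otimes e\{n_y+1,n_y+1\}\otimes I_{n_x+1}$, $L_B=e\{1,n_z+1\}\otimes I_{n_y+1}\otimes I_{n_x+1}$, $L_T=e\{n_z+1,n_z+1\}\otimes I_{n_y+1}\otimes I_{n_x+1}$; let $M$ be the number of columns of $L$. $D_{\hat n}=\mathrm{diag}(-I_{(n_y+1)(n_z+1)},I_{(n_y+1)(n_z+1)},-I_{(n_x+1)(n_z+1)},I_{(n_x+1)(n_z+1)},-I_{(n_x+1)(n_y+1)},I_{(n_x+1)(n_y+1)})$; $D_{S,b}''=\mathrm{diag}(\Delta y\Delta z\,\tilde I_{n_z+1}\otimes\tilde I_{n_y+1},\ \Delta y\Delta z\,\tilde I_{n_z+1}\otimes\tilde I_{n_y+1},\ \Delta x\Delta z\,\tilde I_{n_z+1}\otimes\tilde I_{n_x+1},\ \Delta x\Delta z\,\tilde I_{n_z+1}\otimes\tilde I_{n_x+1},\ \Delta x\Delta y\,\tilde I_{n_y+1}\otimes\tilde I_{n_x+1},\ \Delta x\Delta y\,\tilde I_{n_y+1}\otimes\tilde I_{n_x+1})$; $H_\perp=\frac{\hbar^2}{2m}L D_{\hat n}D_{S,b}''$. FDTD-Q scheme: real vectors $\psi_R^n\in\mathbb{R}^N$ and $\psi_I^{n-\frac12}\in\mathbb{R}^N$ ($n=0,\dots,n_t$), and arbitrary boundary vectors $g_R^n\in\mathbb{R}^M$, $g_I^{n+\frac12}\in\mathbb{R}^M$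 ($n=0,\dots,n_t-1$), satisfying for $n=0,\dots,n_t-1$: $\hbar D_V''\frac{\psi_R^{n+1}-\psi_R^n}{\Delta t}=H\psi_I^{n+\frac12}-H_\perp g_I^{n+\frac12}$ and $\hbar D_V''\frac{\psi_I^{n+\frac12}-\psi_I^{n-\frac12}}{\Delta t}=-H\psi_R^n+H_\perp g_R^n$. Let $\psi^n=\begin{bmatrix}\psi_R^n\\ \psi_I^{n-\frac12}\end{bmatrix}$, $g^{n+\frac12}=\begin{bmatrix}g_R^n\\ g_I^{n+\frac12}\end{bmatrix}$, $J_1=\begin{bmatrix}0&1\\-1&0\end{bmatrix}$. Total probability: $\mathcal{P}^n=(\psi^n)^T\mathbf{P}\psi^n$, $n=0,\dots,n_t$. Probability current: $\mathcal{I}_P^{n+\frac12}=\frac{2}{\hbar}\left(\frac{\psi^{n+1}+\psi^n}{2}\right)^T(J_1\otimes H_\perp)g^{n+\frac12}$, $n=0,\dots,n_t-1$. *)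

theory Defs
  imports "Jordan_Normal_Form.Matrix" "Jordan_Normal_Form.Spectral_Radius"
begin

definition kron :: "real mat \<Rightarrow> real mat \<Rightarrow> real mat" where
  "kron A B = mat (dim_row A * dim_row B) (dim_col A * dim_col B)
     (\<lambda>(i,j). A $$ (i div dim_row B, j div dim_col B) * B $$ (i mod dim_row B, j mod dim_col B))"

definition hcat :: "real mat \<Rightarrow> real mat \<Rightarrow> real mat" where
  "hcat A B = four_block_mat A B (0\<^sub>m 0 (dim_col A)) (0\<^sub>m 0 (dim_col B))"

abbreviation bdiag :: "real mat list \<Rightarrow> real mat" where
  "bdiag As \<equiv> diag_block_mat As"

definition diag_inv :: "real mat \<Rightarrow> real mat" where
  "diag_inv D = mat_diag (dim_row D) (\<lambda>i. 1 / D $$ (i,i))"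

definition diag_inv_sqrt :: "real mat \<Rightarrow> real mat" where
  "diag_inv_sqrt D = mat_diag (dim_row D) (\<lambda>i. 1 / sqrt (D $$ (i,i)))"

definition Itil :: "nat \<Rightarrow> real mat" where
  "Itil p = mat_diag p (\<lambda>i. if i = 0 \<or> i = p - 1 then 1/2 else 1)"

definition Wm :: "nat \<Rightarrow> real mat" where
  "Wm p = mat p (p+1) (\<lambda>(i,j). (if j = i + 1 then 1 else 0) - (if j = i then 1 else 0))"

text \<open>$e\{p,q\}$: $q \times 1$ column with 1 in (1-based) position $p$.\<close>
definition evec :: "nat \<Rightarrow> nat \<Rightarrow> real mat" where
  "evec p q = mat q 1 (\<lambda>(i,j). if i = p - 1 then 1 else 0)"

abbreviation Id :: "nat \<Rightarrow> real mat" where "Id p \<equiv> 1\<^sub>m p"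

abbreviation kron3 :: "real mat \<Rightarrow> real mat \<Rightarrow> real mat \<Rightarrow> real mat" where
  "kron3 A B C \<equiv> kron A (kron B C)"

definition Nnodes :: "nat \<Rightarrow> nat \<Rightarrow> nat \<Rightarrow> nat" where
  "Nnodes nx ny nz = (nx+1)*(ny+1)*(nz+1)"

definition DV :: "nat \<Rightarrow> nat \<Rightarrow> nat \<Rightarrow> real \<Rightarrow> real \<Rightarrow> real \<Rightarrow> real mat" where
  "DV nx ny nz dx dy dz = (dx*dy*dz) \<cdot>\<^sub>m kron3 (Itil (nz+1)) (Itil (ny+1)) (Itil (nx+1))"

definition Dx :: "nat \<Rightarrow> nat \<Rightarrow> nat \<Rightarrow> real mat" where
  "Dx nx ny nz = - kron3 (Id (nz+1)) (Id (ny+1)) (transpose_mat (Wm nx))"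
definition Dy :: "nat \<Rightarrow> nat \<Rightarrow> nat \<Rightarrow> real mat" where
  "Dy nx ny nz = - kron3 (Id (nz+1)) (transpose_mat (Wm ny)) (Id (nx+1))"
definition Dz :: "nat \<Rightarrow> nat \<Rightarrow> nat \<Rightarrow> real mat" where
  "Dz nx ny nz = - kron3 (transpose_mat (Wm nz)) (Id (ny+1)) (Id (nx+1))"

definition Dmat :: "nat \<Rightarrow> nat \<Rightarrow> nat \<Rightarrow> real mat" where
  "Dmat nx ny nz = hcat (Dx nx ny nz) (hcat (Dy nx ny nz) (Dz nx ny nz))"

definition DS :: "nat \<Rightarrow> nat \<Rightarrow> nat \<Rightarrow> real \<Rightarrow> real \<Rightarrow> real \<Rightarrow> real mat" where
  "DS nx ny nz dx dy dz = bdiag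
     [(dy*dz) \<cdot>\<^sub>m kron3 (Itil (nz+1)) (Itil (ny+1)) (Id nx),
      (dx*dz) \<cdot>\<^sub>m kron3 (Itil (nz+1)) (Id ny) (Itil (nx+1)),
      (dx*dy) \<cdot>\<^sub>m kron3 (Id nz) (Itil (ny+1)) (Itil (nx+1))]"

definition Dl :: "nat \<Rightarrow> nat \<Rightarrow> nat \<Rightarrow> real \<Rightarrow> real \<Rightarrow> real \<Rightarrow> real mat" where
  "Dl nx ny nz dx dy dz = bdiag
     [dx \<cdot>\<^sub>m Id (nx*(ny+1)*(nz+1)), dy \<cdot>\<^sub>m Id ((nx+1)*ny*(nz+1)), dz \<cdot>\<^sub>m Id ((nx+1)*(ny+1)*nz)]"

definition DU :: "real vec \<Rightarrow> real mat" where
  "DU U = mat_diag (dim_vec U) (\<lambda>i. U $ i)"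

definition Hmat :: "real \<Rightarrow> real \<Rightarrow> nat \<Rightarrow> nat \<Rightarrow> nat \<Rightarrow> real \<Rightarrow> real \<Rightarrow> real \<Rightarrow> real vec \<Rightarrow> real mat" where
  "Hmat hbar m nx ny nz dx dy dz U =
     (hbar^2 / (2*m)) \<cdot>\<^sub>m (Dmat nx ny nz * DS nx ny nz dx dy dz * diag_inv (Dl nx ny nz dx dy dz)
        * transpose_mat (Dmat nx ny nz))
     + DV nx ny nz dx dy dz * DU U"

definition Pmat :: "real \<Rightarrow> real \<Rightarrow> real \<Rightarrow> nat \<Rightarrow> nat \<Rightarrow> nat \<Rightarrow> real \<Rightarrow> real \<Rightarrow> real \<Rightarrow> real vec \<Rightarrow> real mat" where
  "Pmat hbar m dt nx ny nz dx dy dz U =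
     (let V = DV nx ny nz dx dy dz; K = (- dt / (2*hbar)) \<cdot>\<^sub>m Hmat hbar m nx ny nz dx dy dz U
      in four_block_mat V K K V)"

definition Lmat :: "nat \<Rightarrow> nat \<Rightarrow> nat \<Rightarrow> real mat" where
  "Lmat nx ny nz = hcat (kron3 (Id (nz+1)) (Id (ny+1)) (evec 1 (nx+1)))
     (hcat (kron3 (Id (nz+1)) (Id (ny+1)) (evec (nx+1) (nx+1)))
     (hcat (kron3 (Id (nz+1)) (evec 1 (ny+1)) (Id (nx+1)))
     (hcat (kron3 (Id (nz+1)) (evec (ny+1) (ny+1)) (Id (nx+1)))
     (hcat (kron3 (evec 1 (nz+1)) (Id (ny+1)) (Id (nx+1)))
           (kron3 (evec (nz+1) (nz+1)) (Id (ny+1)) (Id (nx+1)))))))"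

definition Mbnd :: "nat \<Rightarrow> nat \<Rightarrow> nat \<Rightarrow> nat" where
  "Mbnd nx ny nz = dim_col (Lmat nx ny nz)"

definition Dn :: "nat \<Rightarrow> nat \<Rightarrow> nat \<Rightarrow> real mat" where
  "Dn nx ny nz = bdiag
     [- Id ((ny+1)*(nz+1)), Id ((ny+1)*(nz+1)),
      - Id ((nx+1)*(nz+1)), Id ((nx+1)*(nz+1)),
      - Id ((nx+1)*(ny+1)), Id ((nx+1)*(ny+1))]"

definition DSb :: "nat \<Rightarrow> nat \<Rightarrow> nat \<Rightarrow> real \<Rightarrow> real \<Rightarrow> real \<Rightarrow> real mat" where
  "DSb nx ny nz dx dy dz = bdiag
     [(dy*dz) \<cdot>\<^sub>m kron (Itil (nz+1)) (Itil (ny+1)),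
      (dy*dz) \<cdot>\<^sub>m kron (Itil (nz+1)) (Itil (ny+1)),
      (dx*dz) \<cdot>\<^sub>m kron (Itil (nz+1)) (Itil (nx+1)),
      (dx*dz) \<cdot>\<^sub>m kron (Itil (nz+1)) (Itil (nx+1)),
      (dx*dy) \<cdot>\<^sub>m kron (Itil (ny+1)) (Itil (nx+1)),
      (dx*dy) \<cdot>\<^sub>m kron (Itil (ny+1)) (Itil (nx+1))]"

definition Hperp :: "real \<Rightarrow> real \<Rightarrow> nat \<Rightarrow> nat \<Rightarrow> nat \<Rightarrow> real \<Rightarrow> real \<Rightarrow> real \<Rightarrow> real mat" where
  "Hperp hbar m nx ny nz dx dy dz =
     (hbar^2 / (2*m)) \<cdot>\<^sub>m (Lmat nx ny nz * Dn nx ny nz * DSb nx ny nz dx dy dz)"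

definition J1 :: "real mat" where
  "J1 = mat 2 2 (\<lambda>(i,j). if i = 0 \<and> j = 1 then 1 else if i = 1 \<and> j = 0 then -1 else 0)"

definition dt_CFL :: "real \<Rightarrow> real \<Rightarrow> nat \<Rightarrow> nat \<Rightarrow> nat \<Rightarrow> real \<Rightarrow> real \<Rightarrow> real \<Rightarrow> real vec \<Rightarrow> real" where
  "dt_CFL hbar m nx ny nz dx dy dz U =
     (let S = diag_inv_sqrt (DV nx ny nz dx dy dz)
      in 2 / spectral_radius (map_mat complex_of_real
              ((1/hbar) \<cdot>\<^sub>m (S * Hmat hbar m nx ny nz dx dy dz U * S))))"

end

(*
  With a = psi_R^n and b = psi_I^(n-1/2), the quadratic form of P is
  a.Va + b.Vb - (dt/hbar) a.Hb, where V = D_V'' is a positive diagonal matrix and H is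
  symmetric.

  Balance: taking the scalar product of the first update with psi_R^(n+1) + psi_R^n and of
  the second with psi_I^(n+1/2) + psi_I^(n-1/2) telescopes the V-terms; by the symmetry of H
  the interior H-terms add up to the change of the cross term, and only the boundary terms
  H_perp g remain, which make up the current.

  Nonnegativity: with u = V^(1/2) a and v = V^(1/2) b the form is |u|^2 + |v|^2 - 2 u.Cv for
  the symmetric matrix C = (dt/(2 hbar)) V^(-1/2) H V^(-1/2), whose spectral radius is below 1
  by the CFL condition. Hence the powers of C are bounded (Jordan normal form), and iterating
  the Cauchy-Schwarz inequality (w.Cw)^2 <= |w|^2 w.C^2 w bounds (|w.Cw| / |w|^2)^(2^j)
  uniformly in j, so |w.Cw| <= |w|^2 without appeal to the spectral theorem. Polarisation
  then gives 2 u.Cv <= |u|^2 + |v|^2.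
*)

theory Submission
  imports Defs
begin

lemma transpose_smult_mat: "transpose_mat (c \<cdot>\<^sub>m A) = c \<cdot>\<^sub>m transpose_mat A"
  by (rule eq_matI) auto

lemma smult_mat_mult_vec:
  fixes A :: "'a :: comm_ring mat"
  assumes "A \<in> carrier_mat n m" and "v \<in> carrier_vec m"
  shows "(c \<cdot>\<^sub>m A) *\<^sub>v v = c \<cdot>\<^sub>v (A *\<^sub>v v)"
  using assms by (intro eq_vecI) (auto simp: scalar_prod_def sum_distrib_left ac_simps)

lemma dim_mat_diag [simp]: "dim_row (mat_diag n f) = n" "dim_col (mat_diag n f) = n"
  by (simp_all add: mat_diag_def)

lemma transpose_mat_diag: "transpose_mat (mat_diag n f) = mat_diag n f"
  by (rule eq_matI) (auto simp: mat_diag_def)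

lemma smult_mat_diag: "(c :: 'a :: mult_zero) \<cdot>\<^sub>m mat_diag n f = mat_diag n (\<lambda>i. c * f i)"
  by (rule eq_matI) (auto simp: mat_diag_def)

lemma diagonal_mat_mat_diag: "diagonal_mat (mat_diag n f)"
  by (simp add: diagonal_mat_def mat_diag_def)

lemma diagonal_mat_eq_mat_diag:
  assumes "A \<in> carrier_mat n n" and "diagonal_mat A"
  shows "A = mat_diag n (\<lambda>i. A $$ (i,i))"
  using assms by (intro eq_matI) (auto simp: diagonal_mat_def mat_diag_def)

lemma diagonal_mat_diag_block_mat:
  assumes "\<And>A. A \<in> set As \<Longrightarrow> diagonal_mat A \<and> square_mat A"
  shows "diagonal_mat (diag_block_mat As)"
  using assms
proof (induction As)
  case (Cons A As)
  have "square_mat (diag_block_mat As)"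
    by (rule diag_block_mat_square) (use Cons.prems in auto)
  moreover have "diagonal_mat A" "square_mat A" "diagonal_mat (diag_block_mat As)"
    using Cons by auto
  ultimately show ?case
    by (auto simp: diagonal_mat_def Let_def)
qed (simp add: diagonal_mat_def)

lemma pow_mat_add:
  assumes A: "A \<in> carrier_mat n n"
  shows "A ^\<^sub>m (k + l) = A ^\<^sub>m k * A ^\<^sub>m l"
proof (induction l)
  case (Suc l)
  then show ?case using A by (simp add: assoc_mult_mat[of _ n n _ n _ n])
qed (use A in simp)

lemma transpose_pow_mat:
  fixes A :: "'a :: comm_semiring_1 mat"
  assumes A: "A \<in> carrier_mat n n" and sym: "transpose_mat A = A"
  shows "transpose_mat (A ^\<^sub>m k) = A ^\<^sub>m k"
proof (induction k)
  case (Suc k)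
  have "transpose_mat (A ^\<^sub>m Suc k) = A * A ^\<^sub>m k"
    using A Suc sym by (simp add: transpose_mult[of _ n n _ n])
  also have "\<dots> = A ^\<^sub>m Suc k"
    using pow_mat_add[OF A, of 1 k] pow_mat_add[OF A, of k 1] A by simp
  finally show ?case .
qed (use A in simp)

section \<open>Symmetric bilinear forms\<close>

lemma scalar_prod_self_nonneg: "0 \<le> (w :: real vec) \<bullet> w"
  unfolding scalar_prod_def by (simp add: sum_nonneg)

lemma symmetric_form_commute:
  fixes A :: "real mat"
  assumes A: "A \<in> carrier_mat n n" and sym: "transpose_mat A = A"
    and x: "x \<in> carrier_vec n" and y: "y \<in> carrier_vec n"
  shows "x \<bullet> (A *\<^sub>v y) = y \<bullet> (A *\<^sub>v x)"
  using transpose_vec_mult_scalar[OF A y x] comm_scalar_prod[of "A *\<^sub>v x" n y] sym A x y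
  by simp

lemma symmetric_form_sum_diff:
  fixes A :: "real mat"
  assumes A: "A \<in> carrier_mat n n" and sym: "transpose_mat A = A"
    and x: "x \<in> carrier_vec n" and x': "x' \<in> carrier_vec n"
  shows "(x' + x) \<bullet> (A *\<^sub>v (x' - x)) = x' \<bullet> (A *\<^sub>v x') - x \<bullet> (A *\<^sub>v x)"
  using A x x' symmetric_form_commute[OF A sym x x']
  by (simp add: add_scalar_prod_distrib mult_minus_distrib_mat_vec scalar_prod_minus_distrib)

lemma symmetric_congruence:
  fixes D X :: "real mat"
  assumes D: "D \<in> carrier_mat n k" and X: "X \<in> carrier_mat k k" and sym: "transpose_mat X = X"
  shows "transpose_mat (D * X * transpose_mat D) = D * X * transpose_mat D"
proof -
  have DX: "D * X \<in> carrier_mat n k" using D X by simp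
  have "transpose_mat (D * X * transpose_mat D) = D * transpose_mat (D * X)"
    using transpose_mult[OF DX, of "transpose_mat D" n] D by simp
  also have "\<dots> = D * (X * transpose_mat D)"
    using transpose_mult[OF D X] sym by simp
  finally show ?thesis using D X by simp
qed

lemma form_congruence:
  fixes S A :: "real mat"
  assumes S: "S \<in> carrier_mat n n" and sym: "transpose_mat S = S" and A: "A \<in> carrier_mat n n"
    and u: "u \<in> carrier_vec n" and v: "v \<in> carrier_vec n"
  shows "(S *\<^sub>v u) \<bullet> (A *\<^sub>v (S *\<^sub>v v)) = u \<bullet> ((S * A * S) *\<^sub>v v)"
  using transpose_vec_mult_scalar[OF S _ u, of "A *\<^sub>v (S *\<^sub>v v)"] S A u v sym
  by (simp add: assoc_mult_mat_vec[of _ n n _ n])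

lemma four_block_mat_quadratic_form:
  fixes V K :: "real mat"
  assumes V: "V \<in> carrier_mat n n" and K: "K \<in> carrier_mat n n" and sym: "transpose_mat K = K"
    and a: "a \<in> carrier_vec n" and b: "b \<in> carrier_vec n"
  shows "(a @\<^sub>v b) \<bullet> (four_block_mat V K K V *\<^sub>v (a @\<^sub>v b))
     = a \<bullet> (V *\<^sub>v a) + b \<bullet> (V *\<^sub>v b) + 2 * (a \<bullet> (K *\<^sub>v b))"
  using V K a b symmetric_form_commute[OF K sym b a]
  by (simp add: four_block_mat_mult_vec[OF V K K V a b] scalar_prod_append[of _ n _ n]
      scalar_prod_add_distrib[of _ n])

lemma bilinear_form_le_if_quadratic_form_le:
  fixes C :: "real mat"
  assumes C: "C \<in> carrier_mat n n" and sym: "transpose_mat C = C"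
    and quadratic: "\<And>w. w \<in> carrier_vec n \<Longrightarrow> \<bar>w \<bullet> (C *\<^sub>v w)\<bar> \<le> w \<bullet> w"
    and u: "u \<in> carrier_vec n" and v: "v \<in> carrier_vec n"
  shows "2 * (u \<bullet> (C *\<^sub>v v)) \<le> u \<bullet> u + v \<bullet> v"
proof -
  have "4 * (u \<bullet> (C *\<^sub>v v)) = (u + v) \<bullet> (C *\<^sub>v (u + v)) - (u - v) \<bullet> (C *\<^sub>v (u - v))"
    using C u v symmetric_form_commute[OF C sym v u]
    by (simp add: mult_add_distrib_mat_vec mult_minus_distrib_mat_vec add_scalar_prod_distrib
        minus_scalar_prod_distrib scalar_prod_add_distrib scalar_prod_minus_distrib)
  also have "\<dots> \<le> (u + v) \<bullet> (u + v) + (u - v) \<bullet> (u - v)"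
    using quadratic[of "u + v"] quadratic[of "u - v"] u v by fastforce
  also have "\<dots> = 2 * (u \<bullet> u + v \<bullet> v)"
    using u v comm_scalar_prod[OF u v]
    by (simp add: add_scalar_prod_distrib minus_scalar_prod_distrib scalar_prod_add_distrib
        scalar_prod_minus_distrib)
  finally show ?thesis by simp
qed

section \<open>Symmetric matrices of spectral radius below one\<close>

lemma Cauchy_Schwarz_sum:
  fixes a b :: "'i \<Rightarrow> real"
  shows "(\<Sum>i\<in>I. a i * b i)\<^sup>2 \<le> (\<Sum>i\<in>I. (a i)\<^sup>2) * (\<Sum>i\<in>I. (b i)\<^sup>2)"
proof (cases "finite I")
  case True
  define A B C where "A = (\<Sum>i\<in>I. (a i)\<^sup>2)" and "B = (\<Sum>i\<in>I. (b i)\<^sup>2)"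
    and "C = (\<Sum>i\<in>I. a i * b i)"
  have "0 \<le> (\<Sum>i\<in>I. (B * a i - C * b i)\<^sup>2)" by (simp add: sum_nonneg)
  also have "\<dots> = (\<Sum>i\<in>I. B\<^sup>2 * (a i)\<^sup>2 - 2 * B * C * (a i * b i) + C\<^sup>2 * (b i)\<^sup>2)"
    by (simp add: power2_eq_square algebra_simps)
  also have "\<dots> = B * (A * B - C\<^sup>2)"
    unfolding sum.distrib sum_subtractf sum_distrib_left[symmetric] A_def[symmetric]
      B_def[symmetric] C_def[symmetric]
    by (simp add: power2_eq_square algebra_simps)
  finally have "0 \<le> B * (A * B - C\<^sup>2)" .
  moreover have "B = 0 \<Longrightarrow> C = 0"
    using True by (simp add: B_def C_def sum_nonneg_eq_0_iff)
  moreover have "0 \<le> B" by (simp add: B_def sum_nonneg)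
  ultimately show ?thesis
    unfolding A_def[symmetric] B_def[symmetric] C_def[symmetric]
    by (cases "B = 0") (auto simp: zero_le_mult_iff)
qed simp

lemma Cauchy_Schwarz_scalar_prod:
  fixes x y :: "real vec"
  assumes "x \<in> carrier_vec n" and "y \<in> carrier_vec n"
  shows "(x \<bullet> y)\<^sup>2 \<le> (x \<bullet> x) * (y \<bullet> y)"
  using Cauchy_Schwarz_sum[of "\<lambda>i. x $ i" "\<lambda>i. y $ i" "{0..<n}"] assms
  by (simp add: scalar_prod_def power2_eq_square)

lemma symmetric_form_square_le:
  fixes M :: "real mat"
  assumes M: "M \<in> carrier_mat n n" and sym: "transpose_mat M = M" and w: "w \<in> carrier_vec n"
  shows "(w \<bullet> (M *\<^sub>v w))\<^sup>2 \<le> (w \<bullet> w) * \<bar>w \<bullet> ((M * M) *\<^sub>v w)\<bar>"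
proof -
  have "w \<bullet> ((M * M) *\<^sub>v w) = (M *\<^sub>v w) \<bullet> (M *\<^sub>v w)"
    using transpose_vec_mult_scalar[OF M _ w, of "M *\<^sub>v w"] M w sym by simp
  then show ?thesis
    using Cauchy_Schwarz_scalar_prod[OF w, of "M *\<^sub>v w"] M w scalar_prod_self_nonneg[of "M *\<^sub>v w"]
    by simp
qed

lemma symmetric_form_power_bound:
  fixes C :: "real mat"
  assumes C: "C \<in> carrier_mat n n" and sym: "transpose_mat C = C" and w: "w \<in> carrier_vec n"
  shows "\<bar>w \<bullet> (C *\<^sub>v w)\<bar> ^ 2 ^ j \<le> (w \<bullet> w) ^ (2 ^ j - 1) * \<bar>w \<bullet> ((C ^\<^sub>m 2 ^ j) *\<^sub>v w)\<bar>"
proof (induction j)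
  case 0
  then show ?case using C by simp
next
  case (Suc j)
  let ?s = "w \<bullet> w" and ?M = "C ^\<^sub>m 2 ^ j"
  have M: "?M \<in> carrier_mat n n" using C by simp
  have square: "C ^\<^sub>m 2 ^ Suc j = ?M * ?M"
    using pow_mat_add[OF C, of "2 ^ j" "2 ^ j"] by (simp add: mult_2)
  have exponent: "2 ^ Suc j - 1 = (2 ^ j - 1) + (2 ^ j - 1) + (1 :: nat)"
    using one_le_power[of "2::nat" j] by (subst power_Suc) arith
  have "\<bar>w \<bullet> (C *\<^sub>v w)\<bar> ^ 2 ^ Suc j = (\<bar>w \<bullet> (C *\<^sub>v w)\<bar> ^ 2 ^ j)\<^sup>2"
    by (simp add: power_mult[symmetric] mult.commute)
  also have "\<dots> \<le> (?s ^ (2 ^ j - 1) * \<bar>w \<bullet> (?M *\<^sub>v w)\<bar>)\<^sup>2"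
    using Suc by (simp add: power_mono)
  also have "\<dots> = ?s ^ (2 ^ j - 1) * ?s ^ (2 ^ j - 1) * (w \<bullet> (?M *\<^sub>v w))\<^sup>2"
    by (simp add: power2_eq_square)
  also have "\<dots> \<le> ?s ^ (2 ^ j - 1) * ?s ^ (2 ^ j - 1) * (?s * \<bar>w \<bullet> ((?M * ?M) *\<^sub>v w)\<bar>)"
    using symmetric_form_square_le[OF M transpose_pow_mat[OF C sym] w] scalar_prod_self_nonneg[of w]
    by (simp add: mult_left_mono)
  also have "\<dots> = ?s ^ (2 ^ Suc j - 1) * \<bar>w \<bullet> ((C ^\<^sub>m 2 ^ Suc j) *\<^sub>v w)\<bar>"
    unfolding square exponent power_add by simp
  finally show ?case .
qed

lemma quadratic_form_entry_bound:
  fixes M :: "real mat"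
  assumes M: "M \<in> carrier_mat n n" and w: "w \<in> carrier_vec n"
    and bound: "\<And>i j. i < n \<Longrightarrow> j < n \<Longrightarrow> \<bar>M $$ (i,j)\<bar> \<le> c"
  shows "\<bar>w \<bullet> (M *\<^sub>v w)\<bar> \<le> c * (\<Sum>i<n. \<bar>w $ i\<bar>)\<^sup>2"
proof -
  have "\<bar>w \<bullet> (M *\<^sub>v w)\<bar> = \<bar>\<Sum>i<n. \<Sum>j<n. w $ i * M $$ (i,j) * w $ j\<bar>"
    using M w by (auto simp: scalar_prod_def sum_distrib_left lessThan_atLeast0 ac_simps
        intro!: sum.cong)
  also have "\<dots> \<le> (\<Sum>i<n. \<Sum>j<n. \<bar>w $ i * M $$ (i,j) * w $ j\<bar>)"
    by (rule order_trans[OF sum_abs sum_mono[OF sum_abs]])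
  also have "\<dots> \<le> (\<Sum>i<n. \<Sum>j<n. c * (\<bar>w $ i\<bar> * \<bar>w $ j\<bar>))"
  proof (intro sum_mono)
    fix i j assume "i \<in> {..<n}" "j \<in> {..<n}"
    then have "\<bar>M $$ (i,j)\<bar> * (\<bar>w $ i\<bar> * \<bar>w $ j\<bar>) \<le> c * (\<bar>w $ i\<bar> * \<bar>w $ j\<bar>)"
      using bound by (simp add: mult_right_mono)
    then show "\<bar>w $ i * M $$ (i,j) * w $ j\<bar> \<le> c * (\<bar>w $ i\<bar> * \<bar>w $ j\<bar>)"
      by (simp add: abs_mult ac_simps)
  qed
  also have "\<dots> = c * (\<Sum>i<n. \<bar>w $ i\<bar>)\<^sup>2"
    by (simp add: power2_eq_square sum_distrib_left sum_distrib_right ac_simps)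
  finally show ?thesis .
qed

lemma le_1_if_dyadic_powers_bounded:
  fixes t K :: real
  assumes "\<And>j. t ^ 2 ^ j \<le> K"
  shows "t \<le> 1"
proof (rule ccontr)
  assume "\<not> t \<le> 1"
  then obtain j where "K < t ^ j" using real_arch_pow[of t K] by auto
  also have "\<dots> \<le> t ^ 2 ^ j"
    using \<open>\<not> t \<le> 1\<close> by (intro power_increasing) (auto intro: less_imp_le[OF less_exp])
  finally show False using assms[of j] by simp
qed

lemma symmetric_form_le_if_powers_bounded:
  fixes C :: "real mat"
  assumes C: "C \<in> carrier_mat n n" and sym: "transpose_mat C = C"
    and bounded: "\<And>k i j. i < n \<Longrightarrow> j < n \<Longrightarrow> \<bar>(C ^\<^sub>m k) $$ (i,j)\<bar> \<le> c"
    and w: "w \<in> carrier_vec n"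
  shows "\<bar>w \<bullet> (C *\<^sub>v w)\<bar> \<le> w \<bullet> w"
proof -
  define q s K where "q = \<bar>w \<bullet> (C *\<^sub>v w)\<bar>" and "s = w \<bullet> w"
    and "K = c * (\<Sum>i<n. \<bar>w $ i\<bar>)\<^sup>2"
  have s: "0 \<le> s" unfolding s_def by (rule scalar_prod_self_nonneg)
  have dyadic: "q ^ 2 ^ j \<le> s ^ (2 ^ j - 1) * K" for j
    using symmetric_form_power_bound[OF C sym w, of j]
      quadratic_form_entry_bound[OF pow_carrier_mat[OF C] w bounded] s
    unfolding q_def s_def K_def by (meson mult_left_mono order_trans zero_le_power)
  show ?thesis
  proof (cases "s = 0")
    case True
    then show ?thesis using dyadic[of 1] unfolding q_def s_def by simp
  next
    case False
    with s have "s > 0" by simp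
    have "(q / s) ^ 2 ^ j \<le> K / s" for j
    proof -
      have "s ^ 2 ^ j = s ^ (2 ^ j - 1) * s"
        by (simp add: power_Suc2[symmetric])
      then show ?thesis
        using dyadic[of j] \<open>s > 0\<close> by (simp add: power_divide divide_simps mult.commute)
    qed
    then have "q / s \<le> 1" by (rule le_1_if_dyadic_powers_bounded)
    then show ?thesis using \<open>s > 0\<close> unfolding q_def s_def by (simp add: divide_le_eq)
  qed
qed

lemma eigenvalue_smult_mat:
  fixes A :: "'a :: field mat"
  assumes A: "A \<in> carrier_mat n n" and c: "c \<noteq> 0" and ev: "eigenvalue (c \<cdot>\<^sub>m A) \<mu>"
  shows "eigenvalue A (\<mu> / c)"
proof -
  obtain v where v: "v \<in> carrier_vec n" "v \<noteq> 0\<^sub>v n" and Av: "c \<cdot>\<^sub>v (A *\<^sub>v v) = \<mu> \<cdot>\<^sub>v v"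
    using ev A smult_mat_mult_vec[OF A] unfolding eigenvalue_def eigenvector_def by auto
  have "A *\<^sub>v v = (\<mu> / c) \<cdot>\<^sub>v v"
  proof (rule eq_vecI)
    fix i assume "i < dim_vec ((\<mu> / c) \<cdot>\<^sub>v v)"
    then show "(A *\<^sub>v v) $ i = ((\<mu> / c) \<cdot>\<^sub>v v) $ i"
      using arg_cong[OF Av, of "\<lambda>x. x $ i"] A v c by (simp add: field_simps)
  qed (use A v in simp)
  then show ?thesis using A v unfolding eigenvalue_def eigenvector_def by auto
qed

lemma spectral_radius_smult_le:
  assumes A: "A \<in> carrier_mat n n" and n: "n > 0" and c: "c \<noteq> 0"
  shows "spectral_radius (c \<cdot>\<^sub>m A) \<le> norm c * spectral_radius A"
proof -
  obtain \<mu> where "\<mu> \<in> spectrum (c \<cdot>\<^sub>m A)" and \<rho>: "spectral_radius (c \<cdot>\<^sub>m A) = norm \<mu>"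
    using spectral_radius_mem_max(1)[of "c \<cdot>\<^sub>m A" n] A n by auto
  then have "\<mu> / c \<in> spectrum A"
    using eigenvalue_smult_mat[OF A c] unfolding spectrum_def by auto
  then have "norm (\<mu> / c) \<le> spectral_radius A"
    by (intro spectral_radius_mem_max(2)[OF A n]) simp
  then show ?thesis using \<rho> c by (simp add: norm_divide divide_le_eq mult.commute)
qed

lemma real_mat_powers_bounded:
  fixes C :: "real mat"
  assumes C: "C \<in> carrier_mat n n"
    and \<rho>: "spectral_radius (map_mat complex_of_real C) < 1"
  obtains c where "\<And>k i j. i < n \<Longrightarrow> j < n \<Longrightarrow> \<bar>(C ^\<^sub>m k) $$ (i,j)\<bar> \<le> c"
proof -
  obtain c where c: "\<And>k. norm_bound (map_mat complex_of_real C ^\<^sub>m k) c"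
    using spectral_radius_jnf_norm_bound_less_1_upper_triangular[OF _ \<rho>] C by auto
  have "\<bar>(C ^\<^sub>m k) $$ (i,j)\<bar> \<le> c" if "i < n" "j < n" for k i j
    using c[of k] that C unfolding norm_bound_def of_real_hom.mat_hom_pow[OF C, symmetric]
    by auto
  then show ?thesis using that by blast
qed

lemma symmetric_form_le_if_spectral_radius_less_1:
  fixes C :: "real mat"
  assumes C: "C \<in> carrier_mat n n" and sym: "transpose_mat C = C"
    and \<rho>: "spectral_radius (map_mat complex_of_real C) < 1" and w: "w \<in> carrier_vec n"
  shows "\<bar>w \<bullet> (C *\<^sub>v w)\<bar> \<le> w \<bullet> w"
  using real_mat_powers_bounded[OF C \<rho>] symmetric_form_le_if_powers_bounded[OF C sym _ w] by blast

lemma spectral_radius_less_1_if_CFL: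
  fixes B :: "real mat"
  assumes B: "B \<in> carrier_mat n n" and n: "n > 0"
    and dt: "dt > 0" and CFL: "dt < 2 / spectral_radius (map_mat complex_of_real B)"
  shows "spectral_radius (map_mat complex_of_real ((dt / 2) \<cdot>\<^sub>m B)) < 1"
proof -
  have "map_mat complex_of_real ((dt / 2) \<cdot>\<^sub>m B)
      = complex_of_real (dt / 2) \<cdot>\<^sub>m map_mat complex_of_real B"
    by (rule eq_matI) auto
  then have "spectral_radius (map_mat complex_of_real ((dt / 2) \<cdot>\<^sub>m B))
      \<le> dt / 2 * spectral_radius (map_mat complex_of_real B)"
    using spectral_radius_smult_le[of "map_mat complex_of_real B" n "complex_of_real (dt / 2)"] B n dt
    by simp
  also have "\<dots> < 1"
  proof (cases "spectral_radius (map_mat complex_of_real B) > 0")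
    case True
    then show ?thesis using CFL by (simp add: field_simps)
  qed (use dt mult_nonneg_nonpos[of dt "spectral_radius (map_mat complex_of_real B)"] in auto)
  finally show ?thesis .
qed

section \<open>The discrete probability\<close>

definition discrete_probability ::
  "real mat \<Rightarrow> real mat \<Rightarrow> real \<Rightarrow> real vec \<Rightarrow> real vec \<Rightarrow> real" where
  "discrete_probability V H \<tau> a b = a \<bullet> (V *\<^sub>v a) + b \<bullet> (V *\<^sub>v b) - \<tau> * (a \<bullet> (H *\<^sub>v b))"

lemma discrete_probability_balance:
  fixes V H Hp :: "real mat"
  assumes V: "V \<in> carrier_mat n n" and H: "H \<in> carrier_mat n n" and Hp: "Hp \<in> carrier_mat n k"
    and symV: "transpose_mat V = V" and symH: "transpose_mat H = H"
    and a: "a \<in> carrier_vec n" and a': "a' \<in> carrier_vec n"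
    and b: "b \<in> carrier_vec n" and b': "b' \<in> carrier_vec n"
    and gR: "gR \<in> carrier_vec k" and gI: "gI \<in> carrier_vec k"
    and hbar: "hbar \<noteq> 0" and dt: "dt \<noteq> 0"
    and real_step: "(hbar / dt) \<cdot>\<^sub>v (V *\<^sub>v (a' - a)) = H *\<^sub>v b' - Hp *\<^sub>v gI"
    and imag_step: "(hbar / dt) \<cdot>\<^sub>v (V *\<^sub>v (b' - b)) = - (H *\<^sub>v a) + Hp *\<^sub>v gR"
  shows "(discrete_probability V H (dt / hbar) a' b' - discrete_probability V H (dt / hbar) a b) / dt
       = - ((1 / hbar) * ((a' + a) \<bullet> (Hp *\<^sub>v gI) - (b' + b) \<bullet> (Hp *\<^sub>v gR)))"
proof -
  have "(hbar / dt) * (a' \<bullet> (V *\<^sub>v a') - a \<bullet> (V *\<^sub>v a))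
      = (a' + a) \<bullet> ((hbar / dt) \<cdot>\<^sub>v (V *\<^sub>v (a' - a)))"
    using symmetric_form_sum_diff[OF V symV a a'] V a a' by simp
  also have "\<dots> = a' \<bullet> (H *\<^sub>v b') + a \<bullet> (H *\<^sub>v b') - (a' + a) \<bullet> (Hp *\<^sub>v gI)"
    unfolding real_step using H Hp a a' b' gI
    by (simp add: add_scalar_prod_distrib scalar_prod_minus_distrib)
  finally have real_part: "a' \<bullet> (V *\<^sub>v a') - a \<bullet> (V *\<^sub>v a)
      = (dt / hbar) * (a' \<bullet> (H *\<^sub>v b') + a \<bullet> (H *\<^sub>v b') - (a' + a) \<bullet> (Hp *\<^sub>v gI))"
    using hbar dt by (simp add: field_simps)
  have "(hbar / dt) * (b' \<bullet> (V *\<^sub>v b') - b \<bullet> (V *\<^sub>v b))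
      = (b' + b) \<bullet> ((hbar / dt) \<cdot>\<^sub>v (V *\<^sub>v (b' - b)))"
    using symmetric_form_sum_diff[OF V symV b b'] V b b' by simp
  also have "\<dots> = - (a \<bullet> (H *\<^sub>v b')) - a \<bullet> (H *\<^sub>v b) + (b' + b) \<bullet> (Hp *\<^sub>v gR)"
    unfolding imag_step using H Hp a b b' gR
      symmetric_form_commute[OF H symH b' a] symmetric_form_commute[OF H symH b a]
    by (simp add: add_scalar_prod_distrib scalar_prod_add_distrib)
  finally have imag_part: "b' \<bullet> (V *\<^sub>v b') - b \<bullet> (V *\<^sub>v b)
      = (dt / hbar) * (- (a \<bullet> (H *\<^sub>v b')) - a \<bullet> (H *\<^sub>v b) + (b' + b) \<bullet> (Hp *\<^sub>v gR))"
    using hbar dt by (simp add: field_simps)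
  have "discrete_probability V H (dt / hbar) a' b' - discrete_probability V H (dt / hbar) a b
      = (a' \<bullet> (V *\<^sub>v a') - a \<bullet> (V *\<^sub>v a)) + (b' \<bullet> (V *\<^sub>v b') - b \<bullet> (V *\<^sub>v b))
        - (dt / hbar) * (a' \<bullet> (H *\<^sub>v b') - a \<bullet> (H *\<^sub>v b))"
    unfolding discrete_probability_def by (simp add: algebra_simps)
  also have "\<dots> = - (dt / hbar) * ((a' + a) \<bullet> (Hp *\<^sub>v gI) - (b' + b) \<bullet> (Hp *\<^sub>v gR))"
    unfolding real_part imag_part by (simp add: algebra_simps)
  finally show ?thesis using dt by simp
qed

lemma diag_inv_sqrt_mat_diag:
  "diag_inv_sqrt (mat_diag n d) = mat_diag n (\<lambda>i. 1 / sqrt (d i))"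
  by (rule eq_matI) (auto simp: diag_inv_sqrt_def mat_diag_def)

lemma discrete_probability_nonneg:
  fixes H :: "real mat" and d :: "nat \<Rightarrow> real"
  assumes n: "n > 0" and d: "\<And>i. i < n \<Longrightarrow> d i > 0"
    and H: "H \<in> carrier_mat n n" and symH: "transpose_mat H = H"
    and hbar: "hbar > 0" and dt: "dt > 0"
    and CFL: "dt < 2 / spectral_radius (map_mat complex_of_real
      ((1 / hbar) \<cdot>\<^sub>m (diag_inv_sqrt (mat_diag n d) * H * diag_inv_sqrt (mat_diag n d))))"
    and a: "a \<in> carrier_vec n" and b: "b \<in> carrier_vec n"
  shows "0 \<le> discrete_probability (mat_diag n d) H (dt / hbar) a b"
proof -
  define S where "S = mat_diag n (\<lambda>i. 1 / sqrt (d i))"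
  define B where "B = (1 / hbar) \<cdot>\<^sub>m (S * H * S)"
  define C where "C = (dt / 2) \<cdot>\<^sub>m B"
  have S: "S \<in> carrier_mat n n" and symS: "transpose_mat S = S"
    unfolding S_def by (simp_all add: transpose_mat_diag)
  have B: "B \<in> carrier_mat n n" unfolding B_def using S H by simp
  have C: "C \<in> carrier_mat n n" unfolding C_def using B by simp
  have symC: "transpose_mat C = C"
    using symmetric_congruence[OF S H symH] symS unfolding C_def B_def
    by (simp add: transpose_smult_mat)
  have "spectral_radius (map_mat complex_of_real C) < 1"
    using spectral_radius_less_1_if_CFL[OF B n dt] CFL
    unfolding C_def B_def S_def diag_inv_sqrt_mat_diag .
  then have contraction: "\<And>w. w \<in> carrier_vec n \<Longrightarrow> \<bar>w \<bullet> (C *\<^sub>v w)\<bar> \<le> w \<bullet> w"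
    using symmetric_form_le_if_spectral_radius_less_1[OF C symC] by blast
  define R where "R = mat_diag n (\<lambda>i. sqrt (d i))"
  have R: "R \<in> carrier_mat n n" unfolding R_def by simp
  have "d i \<noteq> 0" "\<bar>d i\<bar> = d i" if "i < n" for i using d[OF that] by auto
  then have SR: "S * R = 1\<^sub>m n" and SVS: "S * mat_diag n d * S = 1\<^sub>m n"
    unfolding S_def R_def mat_diag_diag mat_diag_one[symmetric]
    by (auto intro!: eq_matI simp: mat_diag_def field_simps)
  define u v where "u = R *\<^sub>v a" and "v = R *\<^sub>v b"
  have u: "u \<in> carrier_vec n" and v: "v \<in> carrier_vec n" unfolding u_def v_def using R a b by auto
  have a_eq: "a = S *\<^sub>v u" and b_eq: "b = S *\<^sub>v v"
    unfolding u_def v_def using S R a b SR by (simp_all add: assoc_mult_mat_vec[symmetric, of _ n n _ n])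
  have "discrete_probability (mat_diag n d) H (dt / hbar) a b = u \<bullet> u + v \<bullet> v - 2 * (u \<bullet> (C *\<^sub>v v))"
    unfolding discrete_probability_def a_eq b_eq form_congruence[OF S symS mat_diag_dim u u]
      form_congruence[OF S symS mat_diag_dim v v] form_congruence[OF S symS H u v] SVS
    using u v S H hbar unfolding C_def B_def by (simp add: smult_mat_mult_vec[of _ n n])
  also have "\<dots> \<ge> 0"
    using bilinear_form_le_if_quadratic_form_le[OF C symC contraction u v] by simp
  finally show ?thesis .
qed

lemma dim_kron [simp]:
  "dim_row (kron A B) = dim_row A * dim_row B"
  "dim_col (kron A B) = dim_col A * dim_col B"
  by (simp_all add: kron_def)

lemma index_kron:
  assumes "i < dim_row A * dim_row B" "j < dim_col A * dim_col B"
  shows "kron A B $$ (i,j)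
    = A $$ (i div dim_row B, j div dim_col B) * B $$ (i mod dim_row B, j mod dim_col B)"
  using assms by (simp add: kron_def)

lemma kron_mat_diag:
  "kron (mat_diag n f) (mat_diag m g) = mat_diag (n * m) (\<lambda>i. f (i div m) * g (i mod m))"
proof (rule eq_matI)
  fix i j assume i: "i < dim_row (mat_diag (n * m) (\<lambda>i. f (i div m) * g (i mod m)))"
    and j: "j < dim_col (mat_diag (n * m) (\<lambda>i. f (i div m) * g (i mod m)))"
  then have "m > 0" by (auto simp: mat_diag_def intro: gr0I)
  moreover have "i = j \<longleftrightarrow> i div m = j div m \<and> i mod m = j mod m"
    by (metis div_mult_mod_eq)
  ultimately show "kron (mat_diag n f) (mat_diag m g) $$ (i, j)
      = mat_diag (n * m) (\<lambda>i. f (i div m) * g (i mod m)) $$ (i, j)"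
    using i j by (auto simp: index_kron mat_diag_def less_mult_imp_div_less)
qed (simp_all add: mat_diag_def)

lemma kron_J1:
  fixes A :: "real mat"
  assumes A: "A \<in> carrier_mat n k"
  shows "kron J1 A = four_block_mat (0\<^sub>m n k) A (- A) (0\<^sub>m n k)"
proof (rule eq_matI)
  fix i j assume "i < dim_row (four_block_mat (0\<^sub>m n k) A (- A) (0\<^sub>m n k))"
    and "j < dim_col (four_block_mat (0\<^sub>m n k) A (- A) (0\<^sub>m n k))"
  then have i: "i < 2 * n" and j: "j < 2 * k" using A by auto
  have "i div n = (if i < n then 0 else 1)" "i mod n = (if i < n then i else i - n)"
    "j div k = (if j < k then 0 else 1)" "j mod k = (if j < k then j else j - k)"
    using i j by (auto simp: div_if mod_if)
  then show "kron J1 A $$ (i, j) = four_block_mat (0\<^sub>m n k) A (- A) (0\<^sub>m n k) $$ (i, j)"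
    using i j A by (simp add: index_kron J1_def)
qed (use A in \<open>simp_all add: J1_def\<close>)

section \<open>The FDTD-Q matrices\<close>

lemma dim_Itil [simp]: "dim_row (Itil p) = p" "dim_col (Itil p) = p"
  by (simp_all add: Itil_def)

lemma Nnodes_eq: "Nnodes nx ny nz = (nz+1) * ((ny+1) * (nx+1))"
  unfolding Nnodes_def by (simp add: ac_simps)

lemma DV_carrier: "DV nx ny nz dx dy dz \<in> carrier_mat (Nnodes nx ny nz) (Nnodes nx ny nz)"
  unfolding DV_def Nnodes_eq carrier_mat_def by simp

lemma DV_diagonal: "diagonal_mat (DV nx ny nz dx dy dz)"
  unfolding DV_def Itil_def kron_mat_diag smult_mat_diag by (rule diagonal_mat_mat_diag)

lemma DV_diagonal_pos:
  assumes "dx > 0" "dy > 0" "dz > 0" and "i < Nnodes nx ny nz"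
  shows "DV nx ny nz dx dy dz $$ (i,i) > 0"
  using assms unfolding DV_def Itil_def kron_mat_diag smult_mat_diag Nnodes_eq
  by (simp add: mat_diag_def)

lemma Dmat_carrier:
  "Dmat nx ny nz \<in> carrier_mat (Nnodes nx ny nz)
     (nx*(ny+1)*(nz+1) + (nx+1)*ny*(nz+1) + (nx+1)*(ny+1)*nz)"
  unfolding Dmat_def Dx_def Dy_def Dz_def Nnodes_def hcat_def Wm_def carrier_mat_def
  by (simp add: algebra_simps)

lemma DS_carrier:
  "DS nx ny nz dx dy dz \<in> carrier_mat
     (nx*(ny+1)*(nz+1) + (nx+1)*ny*(nz+1) + (nx+1)*(ny+1)*nz)
     (nx*(ny+1)*(nz+1) + (nx+1)*ny*(nz+1) + (nx+1)*(ny+1)*nz)"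
  unfolding DS_def carrier_mat_def by (simp add: dim_diag_block_mat algebra_simps)

lemma Dl_carrier:
  "Dl nx ny nz dx dy dz \<in> carrier_mat
     (nx*(ny+1)*(nz+1) + (nx+1)*ny*(nz+1) + (nx+1)*(ny+1)*nz)
     (nx*(ny+1)*(nz+1) + (nx+1)*ny*(nz+1) + (nx+1)*(ny+1)*nz)"
  unfolding Dl_def carrier_mat_def by (simp add: dim_diag_block_mat algebra_simps)

lemma DS_diagonal: "diagonal_mat (DS nx ny nz dx dy dz)"
  unfolding DS_def Itil_def mat_diag_one[symmetric] kron_mat_diag smult_mat_diag
  by (rule diagonal_mat_diag_block_mat) (auto simp only: set_simps diagonal_mat_mat_diag
      square_mat.simps dim_mat_diag insert_iff empty_iff)

lemma Hmat_carrier_symmetric: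
  assumes U: "U \<in> carrier_vec (Nnodes nx ny nz)"
  shows "Hmat hbar m nx ny nz dx dy dz U \<in> carrier_mat (Nnodes nx ny nz) (Nnodes nx ny nz)"
    and "transpose_mat (Hmat hbar m nx ny nz dx dy dz U) = Hmat hbar m nx ny nz dx dy dz U"
proof -
  let ?N = "Nnodes nx ny nz" and ?k = "nx*(ny+1)*(nz+1) + (nx+1)*ny*(nz+1) + (nx+1)*(ny+1)*nz"
  let ?D = "Dmat nx ny nz" and ?S = "DS nx ny nz dx dy dz"
    and ?L = "diag_inv (Dl nx ny nz dx dy dz)" and ?V = "DV nx ny nz dx dy dz"
  have D: "?D \<in> carrier_mat ?N ?k" by (rule Dmat_carrier)
  have S: "?S \<in> carrier_mat ?k ?k" by (rule DS_carrier)
  have L: "?L = mat_diag ?k (\<lambda>i. 1 / Dl nx ny nz dx dy dz $$ (i,i))"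
    unfolding diag_inv_def carrier_matD(1)[OF Dl_carrier] ..
  have Lc: "?L \<in> carrier_mat ?k ?k" unfolding L by (rule mat_diag_dim)
  obtain s where s: "?S = mat_diag ?k s"
    using diagonal_mat_eq_mat_diag[OF S DS_diagonal] by blast
  obtain v where v: "?V = mat_diag ?N v"
    using diagonal_mat_eq_mat_diag[OF DV_carrier DV_diagonal] by blast
  have SL: "?S * ?L \<in> carrier_mat ?k ?k" "transpose_mat (?S * ?L) = ?S * ?L"
    unfolding s L by (simp_all add: transpose_mat_diag)
  have VU: "?V * DU U \<in> carrier_mat ?N ?N" "transpose_mat (?V * DU U) = ?V * DU U"
    using U unfolding v DU_def by (simp_all add: transpose_mat_diag)
  have H: "Hmat hbar m nx ny nz dx dy dz U
      = (hbar^2 / (2*m)) \<cdot>\<^sub>m (?D * (?S * ?L) * transpose_mat ?D) + ?V * DU U"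
    unfolding Hmat_def assoc_mult_mat[OF D S Lc] ..
  show "Hmat hbar m nx ny nz dx dy dz U \<in> carrier_mat ?N ?N"
    unfolding H using D SL(1) VU(1) by simp
  show "transpose_mat (Hmat hbar m nx ny nz dx dy dz U) = Hmat hbar m nx ny nz dx dy dz U"
    unfolding H using D SL VU symmetric_congruence[OF D SL]
    by (simp add: transpose_add[of _ ?N ?N] transpose_smult_mat)
qed

lemma Hperp_carrier: "Hperp hbar m nx ny nz dx dy dz \<in> carrier_mat (Nnodes nx ny nz) (Mbnd nx ny nz)"
  unfolding Hperp_def Lmat_def DSb_def Mbnd_def Nnodes_eq carrier_mat_def hcat_def evec_def
  by (simp add: dim_diag_block_mat)

lemma Pmat_quadratic_form:
  assumes U: "U \<in> carrier_vec (Nnodes nx ny nz)"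
    and a: "a \<in> carrier_vec (Nnodes nx ny nz)" and b: "b \<in> carrier_vec (Nnodes nx ny nz)"
  shows "(a @\<^sub>v b) \<bullet> (Pmat hbar m dt nx ny nz dx dy dz U *\<^sub>v (a @\<^sub>v b))
    = discrete_probability (DV nx ny nz dx dy dz) (Hmat hbar m nx ny nz dx dy dz U) (dt / hbar) a b"
proof -
  let ?H = "Hmat hbar m nx ny nz dx dy dz U"
  let ?K = "(- dt / (2 * hbar)) \<cdot>\<^sub>m ?H"
  note H = Hmat_carrier_symmetric[OF U, of hbar m dx dy dz]
  have K: "?K \<in> carrier_mat (Nnodes nx ny nz) (Nnodes nx ny nz)" "transpose_mat ?K = ?K"
    using H by (simp_all add: transpose_smult_mat)
  show ?thesis
    unfolding Pmat_def Let_def four_block_mat_quadratic_form[OF DV_carrier K a b]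
      discrete_probability_def
    using H(1) a b by (simp add: smult_mat_mult_vec[OF H(1)])
qed

lemma probability_current_eq:
  fixes Hp :: "real mat"
  assumes Hp: "Hp \<in> carrier_mat n k"
    and a: "a \<in> carrier_vec n" and a': "a' \<in> carrier_vec n"
    and b: "b \<in> carrier_vec n" and b': "b' \<in> carrier_vec n"
    and gR: "gR \<in> carrier_vec k" and gI: "gI \<in> carrier_vec k"
  shows "(2 / hbar) * (((1/2) \<cdot>\<^sub>v ((a' @\<^sub>v b') + (a @\<^sub>v b))) \<bullet> (kron J1 Hp *\<^sub>v (gR @\<^sub>v gI)))
    = (1 / hbar) * ((a' + a) \<bullet> (Hp *\<^sub>v gI) - (b' + b) \<bullet> (Hp *\<^sub>v gR))"
proof -
  have "kron J1 Hp *\<^sub>v (gR @\<^sub>v gI)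
      = (0\<^sub>m n k *\<^sub>v gR + Hp *\<^sub>v gI) @\<^sub>v (- Hp *\<^sub>v gR + 0\<^sub>m n k *\<^sub>v gI)"
    unfolding kron_J1[OF Hp] by (rule four_block_mat_mult_vec) (use Hp gR gI in auto)
  also have "\<dots> = (Hp *\<^sub>v gI) @\<^sub>v (- (Hp *\<^sub>v gR))"
    using Hp gR gI by (intro eq_vecI) auto
  moreover have "(1/2) \<cdot>\<^sub>v ((a' @\<^sub>v b') + (a @\<^sub>v b)) = ((1/2) \<cdot>\<^sub>v (a' + a)) @\<^sub>v ((1/2) \<cdot>\<^sub>v (b' + b))"
    using a a' b b' by (intro eq_vecI) auto
  ultimately show ?thesis
    using Hp a a' b b' gR gI by (simp add: scalar_prod_append[of _ n _ n])
qed

lemma Pmat_form_nonneg: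
  assumes hbar: "hbar > 0" and "dx > 0" "dy > 0" "dz > 0"
    and U: "U \<in> carrier_vec (Nnodes nx ny nz)"
    and dt: "0 < dt" and CFL: "dt < dt_CFL hbar m nx ny nz dx dy dz U"
    and a: "a \<in> carrier_vec (Nnodes nx ny nz)" and b: "b \<in> carrier_vec (Nnodes nx ny nz)"
  shows "0 \<le> (a @\<^sub>v b) \<bullet> (Pmat hbar m dt nx ny nz dx dy dz U *\<^sub>v (a @\<^sub>v b))"
proof -
  let ?N = "Nnodes nx ny nz" and ?V = "DV nx ny nz dx dy dz"
  define d where "d i = ?V $$ (i,i)" for i
  have V: "?V = mat_diag ?N d"
    unfolding d_def by (rule diagonal_mat_eq_mat_diag[OF DV_carrier DV_diagonal])
  have d: "d i > 0" if "i < ?N" for i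
    unfolding d_def using DV_diagonal_pos[OF assms(2-4) that] .
  note H = Hmat_carrier_symmetric[OF U]
  have "dt < 2 / spectral_radius (map_mat complex_of_real ((1 / hbar) \<cdot>\<^sub>m
      (diag_inv_sqrt (mat_diag ?N d) * Hmat hbar m nx ny nz dx dy dz U * diag_inv_sqrt (mat_diag ?N d))))"
    using CFL unfolding dt_CFL_def Let_def V .
  from discrete_probability_nonneg[OF _ d H hbar dt this a b] show ?thesis
    unfolding Pmat_quadratic_form[OF U a b] V by (simp add: Nnodes_def)
qed

lemma Pmat_form_step:
  assumes hbar: "hbar > 0" and dt: "dt > 0" and U: "U \<in> carrier_vec (Nnodes nx ny nz)"
    and a: "a \<in> carrier_vec (Nnodes nx ny nz)" and a': "a' \<in> carrier_vec (Nnodes nx ny nz)"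
    and b: "b \<in> carrier_vec (Nnodes nx ny nz)" and b': "b' \<in> carrier_vec (Nnodes nx ny nz)"
    and gR: "gR \<in> carrier_vec (Mbnd nx ny nz)" and gI: "gI \<in> carrier_vec (Mbnd nx ny nz)"
    and real_step: "(hbar / dt) \<cdot>\<^sub>v (DV nx ny nz dx dy dz *\<^sub>v (a' - a)) =
      Hmat hbar m nx ny nz dx dy dz U *\<^sub>v b' - Hperp hbar m nx ny nz dx dy dz *\<^sub>v gI"
    and imag_step: "(hbar / dt) \<cdot>\<^sub>v (DV nx ny nz dx dy dz *\<^sub>v (b' - b)) =
      - (Hmat hbar m nx ny nz dx dy dz U *\<^sub>v a) + Hperp hbar m nx ny nz dx dy dz *\<^sub>v gR"
  shows "((a' @\<^sub>v b') \<bullet> (Pmat hbar m dt nx ny nz dx dy dz U *\<^sub>v (a' @\<^sub>v b'))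
      - (a @\<^sub>v b) \<bullet> (Pmat hbar m dt nx ny nz dx dy dz U *\<^sub>v (a @\<^sub>v b))) / dt
    = - ((2 / hbar) * (((1/2) \<cdot>\<^sub>v ((a' @\<^sub>v b') + (a @\<^sub>v b))) \<bullet>
        (kron J1 (Hperp hbar m nx ny nz dx dy dz) *\<^sub>v (gR @\<^sub>v gI))))"
proof -
  obtain d where "DV nx ny nz dx dy dz = mat_diag (Nnodes nx ny nz) d"
    using diagonal_mat_eq_mat_diag[OF DV_carrier DV_diagonal] by blast
  then have symV: "transpose_mat (DV nx ny nz dx dy dz) = DV nx ny nz dx dy dz"
    by (simp add: transpose_mat_diag)
  note H = Hmat_carrier_symmetric[OF U]
  show ?thesis
    unfolding Pmat_quadratic_form[OF U a b] Pmat_quadratic_form[OF U a' b']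
      probability_current_eq[OF Hperp_carrier a a' b b' gR gI]
    using hbar dt by (intro discrete_probability_balance[OF DV_carrier H(1) Hperp_carrier symV H(2)
        a a' b b' gR gI _ _ real_step imag_step]) auto
qed

theorem theorem1:
  fixes hbar m dx dy dz dt :: real
    and nx ny nz nt :: nat
    and U :: "real vec"
    and psiR psiI :: "nat \<Rightarrow> real vec"
    and gR gI :: "nat \<Rightarrow> real vec"
  assumes "hbar > 0" and "m > 0" and "dx > 0" and "dy > 0" and "dz > 0"
    and "nx \<ge> 1" and "ny \<ge> 1" and "nz \<ge> 1" and "nt \<ge> 1"
    and "U \<in> carrier_vec (Nnodes nx ny nz)"
    and "0 < dt" and "dt < dt_CFL hbar m nx ny nz dx dy dz U"
    and "\<And>n. n \<le> nt \<Longrightarrow> psiR n \<in> carrier_vec (Nnodes nx ny nz)"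
    and "\<And>n. n \<le> nt \<Longrightarrow> psiI n \<in> carrier_vec (Nnodes nx ny nz)"
    and "\<And>n. n < nt \<Longrightarrow> gR n \<in> carrier_vec (Mbnd nx ny nz)"
    and "\<And>n. n < nt \<Longrightarrow> gI n \<in> carrier_vec (Mbnd nx ny nz)"
    and "\<And>n. n < nt \<Longrightarrow>
      (hbar / dt) \<cdot>\<^sub>v (DV nx ny nz dx dy dz *\<^sub>v (psiR (n+1) - psiR n)) =
        Hmat hbar m nx ny nz dx dy dz U *\<^sub>v psiI (n+1) - Hperp hbar m nx ny nz dx dy dz *\<^sub>v gI n"
    and "\<And>n. n < nt \<Longrightarrow>
      (hbar / dt) \<cdot>\<^sub>v (DV nx ny nz dx dy dz *\<^sub>v (psiI (n+1) - psiI n)) =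
        - (Hmat hbar m nx ny nz dx dy dz U *\<^sub>v psiR n) + Hperp hbar m nx ny nz dx dy dz *\<^sub>v gR n"
  shows
    "let psi = (\<lambda>n. psiR n @\<^sub>v psiI n);
         g = (\<lambda>n. gR n @\<^sub>v gI n);
         Prob = (\<lambda>n. psi n \<bullet> (Pmat hbar m dt nx ny nz dx dy dz U *\<^sub>v psi n));
         Cur = (\<lambda>n. (2 / hbar) * (((1/2) \<cdot>\<^sub>v (psi (n+1) + psi n)) \<bullet>
                    (kron J1 (Hperp hbar m nx ny nz dx dy dz) *\<^sub>v g n)))
     in (\<forall>n \<le> nt. Prob n \<ge> 0) \<and>
        (\<forall>n < nt. (Prob (n+1) - Prob n) / dt = - Cur n)"
proof -
  let ?Prob = "\<lambda>n. (psiR n @\<^sub>v psiI n) \<bullet> (Pmat hbar m dt nx ny nz dx dy dz U *\<^sub>v (psiR n @\<^sub>v psiI n))"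
  let ?Cur = "\<lambda>n. (2 / hbar) * (((1/2) \<cdot>\<^sub>v ((psiR (n+1) @\<^sub>v psiI (n+1)) + (psiR n @\<^sub>v psiI n))) \<bullet>
    (kron J1 (Hperp hbar m nx ny nz dx dy dz) *\<^sub>v (gR n @\<^sub>v gI n)))"
  have "0 \<le> ?Prob n" if "n \<le> nt" for n
    using Pmat_form_nonneg[OF assms(1,3-5,10-12)] assms(13,14) that by blast
  moreover have "(?Prob (n+1) - ?Prob n) / dt = - ?Cur n" if "n < nt" for n
    using Pmat_form_step[OF assms(1,11,10) _ _ _ _ _ _ assms(17,18)[OF that]] assms(13-16) that
    by simp
  ultimately show ?thesis by simp
qed

end
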